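(* Let $k\in\mathbb N$, let $G=(V,E)$ be a graph, let $A,B\subseteq V$ and $v_0\in V$ satisfy: (A1) $A\cap B=\emptyset$, $|A|\ge k$ and $|B|\ge \mathscr R_k$; (A2) $A$ is a clique in $G$; (A3) $\{u,v_0\}\in E$ for every $u\in A$ and $\{v,v_0\}\notin E$ for every $v\in B$; (A4) $\{u,v\}\in E$ for every $u\in A$ and $v\in B$. Then $G$ has a $k$-edge induced subgraph.
   Context: All graphs are simple (finite, nonempty vertex set, undirected, no loops or multiple edges). $\mathscr R_k$ denotes the Ramsey number: the least number such that every graph with at least $\mathscr R_k$ vertices has a clique of size $k$ or an independent set of size $k$. A $k$-edge induced subgraph of $G$ is an induced subgraph $G[S]$ ($S\neq\emptyset$) with exactly $k$ edges. *)

theory Defs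
  imports Main
begin

definition simple_graph :: "'a set \<Rightarrow> 'a set set \<Rightarrow> bool" where
  "simple_graph V E \<longleftrightarrow> finite V \<and> V \<noteq> {} \<and>
     (\<forall>e\<in>E. \<exists>u v. u \<in> V \<and> v \<in> V \<and> u \<noteq> v \<and> e = {u, v})"

definition is_clique :: "'a set \<Rightarrow> 'a set set \<Rightarrow> 'a set \<Rightarrow> bool" where
  "is_clique V E S \<longleftrightarrow> S \<subseteq> V \<and> (\<forall>u\<in>S. \<forall>v\<in>S. u \<noteq> v \<longrightarrow> {u, v} \<in> E)"

definition is_indep :: "'a set \<Rightarrow> 'a set set \<Rightarrow> 'a set \<Rightarrow> bool" where
  "is_indep V E S \<longleftrightarrow> S \<subseteq> V \<and> (\<forall>u\<in>S. \<forall>v\<in>S. u \<noteq> v \<longrightarrow> {u, v} \<notin> E)"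

text \<open>Graphs are quantified with vertices in nat,
  which is w.l.o.g. since every finite graph is isomorphic to one on natural numbers.\<close>
definition ramsey_number :: "nat \<Rightarrow> nat" where
  "ramsey_number k = (LEAST n. \<forall>(V::nat set) E. simple_graph V E \<and> card V \<ge> n \<longrightarrow>
      (\<exists>S. card S = k \<and> is_clique V E S) \<or> (\<exists>S. card S = k \<and> is_indep V E S))"

definition has_k_edge_induced_subgraph :: "'a set \<Rightarrow> 'a set set \<Rightarrow> nat \<Rightarrow> bool" where
  "has_k_edge_induced_subgraph V E k \<longleftrightarrow>
     (\<exists>S. S \<subseteq> V \<and> S \<noteq> {} \<and> card {e\<in>E. e \<subseteq> S} = k)"

end

theory Submission imports Defs "HOL-Library.Ramsey" begin

(* For k >= 2, Ramsey's theorem gives a k-set S in B that is a clique or independent.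
   - If S is independent, a vertex u of A together with S spans exactly the k edges
     from u to S.
   - If S is a clique, write k = (t choose 2) + a with 1 <= a <= t.  The cliques A and
     S - {v0} are completely joined, so a vertices of A and t - a vertices of S - {v0}
     form a t-clique T; v0 sees exactly the a vertices of A in T, hence T + v0 spans
     (t choose 2) + a = k edges.
   The case k = 1 is the same construction with an empty clique; k = 0 is {v0}. *)

definition induced_edges :: "'a set set \<Rightarrow> 'a set \<Rightarrow> 'a set set" where
  "induced_edges E S = {e \<in> E. e \<subseteq> S}"

lemma simple_graph_edge_card:
  assumes "simple_graph V E"
  shows "\<forall>e\<in>E. card e = 2"
  using assms by (auto simp: simple_graph_def)

lemma card_induced_edges_insert:
  assumes two: "\<forall>e\<in>E. card e = 2" and fin: "finite T" and w: "w \<notin> T"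
  shows "card (induced_edges E (insert w T)) = card (induced_edges E T) + card {x\<in>T. {w, x} \<in> E}"
proof -
  have split: "induced_edges E (insert w T) =
      induced_edges E T \<union> (\<lambda>x. {w, x}) ` {x\<in>T. {w, x} \<in> E}"
  proof (rule set_eqI, rule iffI)
    fix e assume e: "e \<in> induced_edges E (insert w T)"
    show "e \<in> induced_edges E T \<union> (\<lambda>x. {w, x}) ` {x\<in>T. {w, x} \<in> E}"
    proof (cases "w \<in> e")
      case True
      have "card e = 2" using e two by (simp add: induced_edges_def)
      then obtain x y where "x \<noteq> y" "e = {x, y}" by (meson card_2_iff)
      with True e show ?thesis by (auto simp: induced_edges_def insert_commute)
    qed (use e in \<open>auto simp: induced_edges_def\<close>)
  qed (use w in \<open>auto simp: induced_edges_def\<close>)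
  have "finite (induced_edges E T)"
    using fin by (auto simp: induced_edges_def intro: finite_subset[of _ "Pow T"])
  moreover have "inj_on (\<lambda>x. {w, x}) {x\<in>T. {w, x} \<in> E}"
    using w by (auto simp: inj_on_def doubleton_eq_iff)
  moreover have "induced_edges E T \<inter> (\<lambda>x. {w, x}) ` {x\<in>T. {w, x} \<in> E} = {}"
    using w by (auto simp: induced_edges_def)
  ultimately show ?thesis
    unfolding split using fin by (simp add: card_Un_disjoint card_image)
qed

lemma card_induced_edges_clique:
  assumes two: "\<forall>e\<in>E. card e = 2" and fin: "finite C" and cl: "clique C E"
  shows "card (induced_edges E C) = card C choose 2"
proof -
  have "induced_edges E C = {e. e \<subseteq> C \<and> card e = 2}"
    using two cl by (fastforce simp: induced_edges_def clique_def card_2_iff)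
  then show ?thesis using n_subsets[OF fin] by simp
qed

lemma induced_edges_indep:
  assumes two: "\<forall>e\<in>E. card e = 2" and ind: "indep S E"
  shows "induced_edges E S = {}"
  using assms by (fastforce simp: induced_edges_def indep_def card_2_iff)

lemma triangular_decomposition:
  assumes "1 \<le> k"
  shows "\<exists>t a. 1 \<le> a \<and> a \<le> t \<and> t \<le> k \<and> k = (t choose 2) + a"
  using assms
proof (induction k rule: dec_induct)
  case base
  show ?case by (intro exI[of _ 1]) simp
next
  case (step k)
  then obtain t a where ta: "1 \<le> a" "a \<le> t" "t \<le> k" "k = (t choose 2) + a" by blast
  show ?case
  proof (cases "a < t")
    case True
    then show ?thesis using ta by (intro exI[of _ t] exI[of _ "Suc a"]) auto
  next
    case False
    have "Suc t choose 2 = t + (t choose 2)" by (simp add: numeral_2_eq_2)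
    then show ?thesis using ta False by (intro exI[of _ "Suc t"] exI[of _ 1]) auto
  qed
qed

lemma clique_join:
  assumes "clique A E" "clique K E" "\<forall>u\<in>A. \<forall>w\<in>K. {u, w} \<in> E"
  shows "clique (A \<union> K) E"
  using assms unfolding clique_def by (metis Un_iff insert_commute)

lemma cone_over_joined_cliques:
  assumes two: "\<forall>e\<in>E. card e = 2"
    and fin: "finite A" "finite K" and cl: "clique A E" "clique K E"
    and disj: "A \<inter> K = {}" and join: "\<forall>u\<in>A. \<forall>w\<in>K. {u, w} \<in> E"
    and v: "v \<notin> A \<union> K" "\<forall>u\<in>A. {u, v} \<in> E" "\<forall>w\<in>K. {w, v} \<notin> E"
    and k: "1 \<le> k" "k \<le> card A" "k - 1 \<le> card K"
  shows "\<exists>S \<subseteq> insert v (A \<union> K). S \<noteq> {} \<and> card (induced_edges E S) = k"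
proof -
  obtain t a where ta: "1 \<le> a" "a \<le> t" "t \<le> k" "k = (t choose 2) + a"
    using triangular_decomposition[OF k(1)] by blast
  have "a \<le> card A" "t - a \<le> card K" using ta k by linarith+
  then obtain A' K' where A': "A' \<subseteq> A" "card A' = a" and K': "K' \<subseteq> K" "card K' = t - a"
    by (metis obtain_subset_with_card_n)
  define T where "T = A' \<union> K'"
  have finAK': "finite A'" "finite K'" using A' K' fin by (auto intro: finite_subset)
  then have finT: "finite T" by (simp add: T_def)
  have "A' \<inter> K' = {}" using A' K' disj by blast
  then have cardT: "card T = t" using finAK' A' K' ta by (simp add: T_def card_Un_disjoint)
  have "clique A' E" "clique K' E" using A' K' cl by (auto simp: clique_def subset_iff)
  then have cliqueT: "clique T E"
    unfolding T_def using A' K' join by (intro clique_join) auto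
  have neighbours_v: "{x\<in>T. {v, x} \<in> E} = A'"
    using A' K' v by (auto simp: T_def insert_commute)
  have "v \<notin> T" using v(1) A' K' by (auto simp: T_def)
  then have "card (induced_edges E (insert v T)) = card (induced_edges E T) + card A'"
    using card_induced_edges_insert[OF two finT] neighbours_v by simp
  also have "\<dots> = k"
    using card_induced_edges_clique[OF two finT cliqueT] cardT A' ta by simp
  finally show ?thesis
    using A' K' ta by (intro exI[of _ "insert v T"]) (auto simp: T_def)
qed

lemma star_over_indep:
  assumes two: "\<forall>e\<in>E. card e = 2"
    and fin: "finite S" and ind: "indep S E" and u: "u \<notin> S" "\<forall>w\<in>S. {u, w} \<in> E"
  shows "card (induced_edges E (insert u S)) = card S"
proof -
  have "{x\<in>S. {u, x} \<in> E} = S" using u by auto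
  then show ?thesis
    using card_induced_edges_insert[OF two fin u(1)] induced_edges_indep[OF two ind] by simp
qed

definition ramsey_bound :: "nat \<Rightarrow> nat \<Rightarrow> bool" where
  "ramsey_bound k n \<longleftrightarrow> (\<forall>(V::nat set) E. simple_graph V E \<and> n \<le> card V \<longrightarrow>
      (\<exists>S. card S = k \<and> is_clique V E S) \<or> (\<exists>S. card S = k \<and> is_indep V E S))"

text \<open>Ramsey bounds exist by Ramsey's theorem, so the Ramsey number is one.\<close>
lemma ramsey_number_property:
  fixes V :: "nat set"
  assumes "simple_graph V E" "ramsey_number k \<le> card V"
  shows "(\<exists>S. card S = k \<and> is_clique V E S) \<or> (\<exists>S. card S = k \<and> is_indep V E S)"
proof -
  obtain r where r: "\<forall>(V::nat set) (E::nat set set). finite V \<and> r \<le> card V \<longrightarrow>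
      (\<exists>R \<subseteq> V. card R = k \<and> clique R E \<or> card R = k \<and> indep R E)"
    using ramsey2[of k k] by blast
  have "ramsey_bound k r"
    unfolding ramsey_bound_def
  proof (intro allI impI)
    fix V :: "nat set" and E assume "simple_graph V E \<and> r \<le> card V"
    then obtain R where "R \<subseteq> V" "card R = k \<and> clique R E \<or> card R = k \<and> indep R E"
      using r by (auto simp: simple_graph_def)
    then show "(\<exists>S. card S = k \<and> is_clique V E S) \<or> (\<exists>S. card S = k \<and> is_indep V E S)"
      by (auto simp: is_clique_def is_indep_def clique_def indep_def)
  qed
  then have "ramsey_bound k (ramsey_number k)"
    unfolding ramsey_number_def ramsey_bound_def[symmetric] by (rule LeastI)
  then show ?thesis using assms unfolding ramsey_bound_def by blast
qed

text \<open>For k \<ge> 2 a graph with fewer than k vertices has no k-set at all, so R_k \<ge> k.\<close>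
lemma ramsey_number_ge:
  assumes "2 \<le> k"
  shows "k \<le> ramsey_number k"
proof (rule ccontr)
  assume small: "\<not> k \<le> ramsey_number k"
  define n where "n = max 1 (ramsey_number k)"
  have "simple_graph {0..<n} {}" by (simp add: simple_graph_def n_def)
  moreover have "ramsey_number k \<le> card {0..<n}" by (simp add: n_def)
  ultimately have "(\<exists>S. card S = k \<and> is_clique {0..<n} {} S) \<or> (\<exists>S. card S = k \<and> is_indep {0..<n} {} S)"
    by (rule ramsey_number_property)
  then obtain S where S: "card S = k" "S \<subseteq> {0..<n}" by (auto simp: is_clique_def is_indep_def)
  then have "k \<le> n" using card_mono[of "{0..<n}" S] by simp
  then show False using small assms by (simp add: n_def)
qed

text \<open>Ramsey's theorem for an arbitrary finite vertex set B: transfer a graph on B to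
  one on {0..<|B|} along a bijection and pull back a homogeneous k-set.\<close>
lemma ramsey_homogeneous_subset:
  fixes B :: "'a set" and E :: "'a set set"
  assumes fin: "finite B" and ne: "B \<noteq> {}" and big: "ramsey_number k \<le> card B"
  shows "\<exists>S \<subseteq> B. card S = k \<and> (clique S E \<or> indep S E)"
proof -
  define n where "n = card B"
  obtain g where g: "bij_betw g {0..<n} B"
    using ex_bij_betw_nat_finite[OF fin] by (auto simp: n_def)
  define E' where "E' = {{i, j} | i j. i < n \<and> j < n \<and> i \<noteq> j \<and> {g i, g j} \<in> E}"
  have edge: "{i, j} \<in> E' \<longleftrightarrow> {g i, g j} \<in> E" if "i < n" "j < n" "i \<noteq> j" for i j
    using that by (auto simp: E'_def doubleton_eq_iff insert_commute)
  have "simple_graph {0..<n} E'"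
    using fin ne by (auto simp: simple_graph_def E'_def n_def)
  then have "(\<exists>S. card S = k \<and> is_clique {0..<n} E' S) \<or> (\<exists>S. card S = k \<and> is_indep {0..<n} E' S)"
    using ramsey_number_property big by (simp add: n_def)
  then obtain S' where S': "card S' = k" "S' \<subseteq> {0..<n}"
    and hom: "is_clique {0..<n} E' S' \<or> is_indep {0..<n} E' S'"
    by (auto simp: is_clique_def is_indep_def)
  have inj: "inj_on g S'" using g S'(2) by (auto simp: bij_betw_def intro: inj_on_subset)
  have "clique (g ` S') E \<or> indep (g ` S') E"
    using hom S'(2) edge inj
    by (auto simp: is_clique_def is_indep_def clique_def indep_def inj_on_def subset_iff)
  moreover have "g ` S' \<subseteq> B" using g S'(2) by (auto simp: bij_betw_def)
  moreover have "card (g ` S') = k" using card_image[OF inj] S'(1) by simp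
  ultimately show ?thesis by blast
qed

locale joined_clique_setting =
  fixes V :: "'a set" and E :: "'a set set" and A B :: "'a set" and v0 :: 'a
  assumes graph: "simple_graph V E"
    and A_sub: "A \<subseteq> V" and B_sub: "B \<subseteq> V" and v0_in: "v0 \<in> V"
    and disjoint: "A \<inter> B = {}"
    and A_clique: "is_clique V E A"
    and v0_adj: "\<forall>u\<in>A. {u, v0} \<in> E" and v0_nonadj: "\<forall>v\<in>B. {v, v0} \<notin> E"
    and join: "\<forall>u\<in>A. \<forall>v\<in>B. {u, v} \<in> E"
begin

lemma edge_card: "\<forall>e\<in>E. card e = 2"
  using simple_graph_edge_card[OF graph] .

lemma finite_A: "finite A" and finite_B: "finite B"
  using graph A_sub B_sub by (auto simp: simple_graph_def intro: finite_subset)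

lemma clique_A: "clique A E"
  using A_clique by (simp add: is_clique_def clique_def)

text \<open>v0 is not in A, since it would then be adjacent to itself.\<close>
lemma v0_notin_A: "v0 \<notin> A"
proof
  assume "v0 \<in> A"
  then have "{v0} \<in> E" using v0_adj by fastforce
  then show False using edge_card by fastforce
qed

lemma zero_edges: "\<exists>S \<subseteq> V. S \<noteq> {} \<and> card (induced_edges E S) = 0"
proof -
  have "induced_edges E {v0} = {}" by (rule induced_edges_indep[OF edge_card]) (simp add: indep_def)
  then show ?thesis using v0_in by (intro exI[of _ "{v0}"]) auto
qed

lemma k_edges_from_clique:
  assumes K: "K \<subseteq> B" "v0 \<notin> K" "clique K E" and k: "1 \<le> k" "k \<le> card A" "k - 1 \<le> card K"
  shows "\<exists>S \<subseteq> V. S \<noteq> {} \<and> card (induced_edges E S) = k"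
proof -
  have "finite K" using K(1) finite_B by (rule finite_subset)
  moreover have "A \<inter> K = {}" "\<forall>u\<in>A. \<forall>w\<in>K. {u, w} \<in> E" "v0 \<notin> A \<union> K" "\<forall>w\<in>K. {w, v0} \<notin> E"
    using K disjoint join v0_nonadj v0_notin_A by auto
  ultimately have "\<exists>S \<subseteq> insert v0 (A \<union> K). S \<noteq> {} \<and> card (induced_edges E S) = k"
    using cone_over_joined_cliques[OF edge_card finite_A _ clique_A K(3)] v0_adj k by simp
  moreover have "insert v0 (A \<union> K) \<subseteq> V" using A_sub B_sub v0_in K(1) by auto
  ultimately show ?thesis by blast
qed

lemma k_edges_from_indep:
  assumes S: "S \<subseteq> B" "indep S E" and card: "1 \<le> card S" "card S \<le> card A"
  shows "\<exists>S' \<subseteq> V. S' \<noteq> {} \<and> card (induced_edges E S') = card S"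
proof -
  obtain u where u: "u \<in> A" using card by fastforce
  have "finite S" using S(1) finite_B by (rule finite_subset)
  moreover have "u \<notin> S" "\<forall>w\<in>S. {u, w} \<in> E" using u S(1) disjoint join by auto
  ultimately have "card (induced_edges E (insert u S)) = card S"
    using star_over_indep[OF edge_card _ S(2)] by simp
  then show ?thesis using u A_sub B_sub S(1) by (intro exI[of _ "insert u S"]) auto
qed

end

theorem lemma3p6:
  fixes V :: "'a set" and E :: "'a set set" and A B :: "'a set" and v0 :: 'a and k :: nat
  assumes G: "simple_graph V E"
    and AV: "A \<subseteq> V" and BV: "B \<subseteq> V" and v0V: "v0 \<in> V"
    and A1: "A \<inter> B = {}" "card A \<ge> k" "card B \<ge> ramsey_number k"
    and A2: "is_clique V E A"
    and A3: "\<forall>u\<in>A. {u, v0} \<in> E" "\<forall>v\<in>B. {v, v0} \<notin> E"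
    and A4: "\<forall>u\<in>A. \<forall>v\<in>B. {u, v} \<in> E"
  shows "has_k_edge_induced_subgraph V E k"
proof -
  interpret joined_clique_setting V E A B v0
    using G AV BV v0V A1(1) A2 A3 A4 by unfold_locales
  consider "k = 0" | "k = 1" | "2 \<le> k" by linarith
  then have "\<exists>S \<subseteq> V. S \<noteq> {} \<and> card (induced_edges E S) = k"
  proof cases
    case 1
    then show ?thesis using zero_edges by simp
  next
    case 2
    then show ?thesis using k_edges_from_clique[of "{}" k] A1(2) by (simp add: clique_def)
  next
    case 3
    have "B \<noteq> {}" using ramsey_number_ge[OF 3] A1(3) 3 by auto
    then obtain S where S: "S \<subseteq> B" "card S = k" "clique S E \<or> indep S E"
      using ramsey_homogeneous_subset finite_B A1(3) by blast
    from S(3) show ?thesis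
    proof
      assume "clique S E"
      then have "clique (S - {v0}) E" by (auto simp: clique_def)
      moreover have "k - 1 \<le> card (S - {v0})" using S(2) by (simp add: card_Diff_singleton_if)
      ultimately show ?thesis using k_edges_from_clique[of "S - {v0}" k] S(1) 3 A1(2) by auto
    next
      assume "indep S E"
      then show ?thesis using k_edges_from_indep[of S] S(1,2) 3 A1(2) by auto
    qed
  qed
  then show ?thesis unfolding has_k_edge_induced_subgraph_def induced_edges_def .
qed

end
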